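(* Let $P$ satisfy (S1)–(S4). Then every element $\bar h\in H$ is both a $[2,t]$-commutator and a $[-2,t]$-commutator, i.e. there are $\bar g_1,\bar g_2\in H$ with $\bar h=\bar g_1\alpha(\bar g_1^{-1})\bar g_2\alpha(\bar g_2^{-1})$ and there are $\bar g_1',\bar g_2'\in H$ with $\bar h=\alpha(\bar g_1')\bar g_1'^{-1}\alpha(\bar g_2')\bar g_2'^{-1}$.
   Context: Conditions on a finite group $P$: (S1) for all $a_1,a_2\in P$ there are $x,y$ with $a_2=x^{-1}a_1^{-1}yxy^{-1}$; (S2) for all $a_1,a_2,a_3$ there are $u,v$ with $a_2=a_3ua_1^{-1}a_3^{-1}vu^{-1}v^{-1}$; (S3) for all $u_1,u_2,u_3,u_4\ne1$ there are $x,y,z$ with $u_4=x^{-1}u_1xy^{-1}u_2yz^{-1}u_3z$; (S4) there are $u_1,u_2,u_3\ne1$ such that there are no $x,y$ with $u_3=x^{-1}u_2^{-1}xy^{-1}u_1^{-1}y$. $H=\bigoplus_{i\in\mathbb Z}H_i$, each $H_i$ a copy of $P$, elements finitely supported sequences $(h_i)_{i\in\mathbb Z}$ with coordinatewise multiplication; $\alpha\in\mathrm{Aut}(H)$ is $\alpha((h_i)_i)=(h_{i+1})_i$. *)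

theory Defs
  imports "HOL-Algebra.Group"
begin

definition S1 :: "('a, 'b) monoid_scheme \<Rightarrow> bool" where
  "S1 P \<longleftrightarrow> (\<forall>a1\<in>carrier P. \<forall>a2\<in>carrier P. \<exists>x\<in>carrier P. \<exists>y\<in>carrier P.
      a2 = inv\<^bsub>P\<^esub> x \<otimes>\<^bsub>P\<^esub> inv\<^bsub>P\<^esub> a1 \<otimes>\<^bsub>P\<^esub> y \<otimes>\<^bsub>P\<^esub> x \<otimes>\<^bsub>P\<^esub> inv\<^bsub>P\<^esub> y)"

definition S2 :: "('a, 'b) monoid_scheme \<Rightarrow> bool" where
  "S2 P \<longleftrightarrow> (\<forall>a1\<in>carrier P. \<forall>a2\<in>carrier P. \<forall>a3\<in>carrier P. \<exists>u\<in>carrier P. \<exists>v\<in>carrier P.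
      a2 = a3 \<otimes>\<^bsub>P\<^esub> u \<otimes>\<^bsub>P\<^esub> inv\<^bsub>P\<^esub> a1 \<otimes>\<^bsub>P\<^esub> inv\<^bsub>P\<^esub> a3 \<otimes>\<^bsub>P\<^esub> v
           \<otimes>\<^bsub>P\<^esub> inv\<^bsub>P\<^esub> u \<otimes>\<^bsub>P\<^esub> inv\<^bsub>P\<^esub> v)"

definition S3 :: "('a, 'b) monoid_scheme \<Rightarrow> bool" where
  "S3 P \<longleftrightarrow> (\<forall>u1\<in>carrier P. \<forall>u2\<in>carrier P. \<forall>u3\<in>carrier P. \<forall>u4\<in>carrier P.
      u1 \<noteq> \<one>\<^bsub>P\<^esub> \<longrightarrow> u2 \<noteq> \<one>\<^bsub>P\<^esub> \<longrightarrow> u3 \<noteq> \<one>\<^bsub>P\<^esub> \<longrightarrow> u4 \<noteq> \<one>\<^bsub>P\<^esub> \<longrightarrow>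
      (\<exists>x\<in>carrier P. \<exists>y\<in>carrier P. \<exists>z\<in>carrier P.
        u4 = inv\<^bsub>P\<^esub> x \<otimes>\<^bsub>P\<^esub> u1 \<otimes>\<^bsub>P\<^esub> x \<otimes>\<^bsub>P\<^esub> inv\<^bsub>P\<^esub> y \<otimes>\<^bsub>P\<^esub> u2 \<otimes>\<^bsub>P\<^esub> y
             \<otimes>\<^bsub>P\<^esub> inv\<^bsub>P\<^esub> z \<otimes>\<^bsub>P\<^esub> u3 \<otimes>\<^bsub>P\<^esub> z))"

definition S4 :: "('a, 'b) monoid_scheme \<Rightarrow> bool" where
  "S4 P \<longleftrightarrow> (\<exists>u1\<in>carrier P. \<exists>u2\<in>carrier P. \<exists>u3\<in>carrier P.
      u1 \<noteq> \<one>\<^bsub>P\<^esub> \<and> u2 \<noteq> \<one>\<^bsub>P\<^esub> \<and> u3 \<noteq> \<one>\<^bsub>P\<^esub> \<and>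
      \<not> (\<exists>x\<in>carrier P. \<exists>y\<in>carrier P.
        u3 = inv\<^bsub>P\<^esub> x \<otimes>\<^bsub>P\<^esub> inv\<^bsub>P\<^esub> u2 \<otimes>\<^bsub>P\<^esub> x \<otimes>\<^bsub>P\<^esub> inv\<^bsub>P\<^esub> y
             \<otimes>\<^bsub>P\<^esub> inv\<^bsub>P\<^esub> u1 \<otimes>\<^bsub>P\<^esub> y))"

text \<open>The restricted direct sum H = \<Oplus>_{i\<in>\<int>} P: finitely supported sequences.\<close>

definition fsseq :: "('a, 'b) monoid_scheme \<Rightarrow> (int \<Rightarrow> 'a) set" where
  "fsseq P = {h. (\<forall>i. h i \<in> carrier P) \<and> finite {i. h i \<noteq> \<one>\<^bsub>P\<^esub>}}"

definition smult :: "('a, 'b) monoid_scheme \<Rightarrow> (int \<Rightarrow> 'a) \<Rightarrow> (int \<Rightarrow> 'a) \<Rightarrow> (int \<Rightarrow> 'a)" where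
  "smult P g h = (\<lambda>i. g i \<otimes>\<^bsub>P\<^esub> h i)"

definition sinv :: "('a, 'b) monoid_scheme \<Rightarrow> (int \<Rightarrow> 'a) \<Rightarrow> (int \<Rightarrow> 'a)" where
  "sinv P g = (\<lambda>i. inv\<^bsub>P\<^esub> (g i))"

definition shift :: "(int \<Rightarrow> 'a) \<Rightarrow> (int \<Rightarrow> 'a)" where
  "shift h = (\<lambda>i. h (i + 1))"

end

theory Submission
  imports Defs "HOL-Library.Infinite_Set"
begin

text \<open>Only (S1) is needed. Given h with support in [m, M], the suffix products
  F i = h i \<cdot> h (i+1) \<cdots> h M satisfy h i = F i \<cdot> (F (i+1))\<inverse>, so h is a single
  [1,t]-commutator except that F does not vanish below m. (S1), applied to
  a = F (m+1) and h m, rewrites h m as a product that lets a second [1,t]-commutator,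
  supported on {m-1, m}, absorb this defect. The [-2,t]-form follows by reflecting
  the index set, i \<mapsto> -1 - i, which turns one form into the other.\<close>

lemma fsseq_bounded_support:
  assumes "h \<in> fsseq P"
  obtains k :: int where "\<And>i. k \<le> \<bar>i\<bar> \<Longrightarrow> h i = \<one>\<^bsub>P\<^esub>"
  using assms infinite_int_iff_unbounded_le[of "{i. h i \<noteq> \<one>\<^bsub>P\<^esub>}"]
  unfolding fsseq_def by blast

lemma fsseq_reflect:
  assumes "g \<in> fsseq P"
  shows "(\<lambda>i. g (c - i)) \<in> fsseq P"
proof -
  have "{i. g (c - i) \<noteq> \<one>\<^bsub>P\<^esub>} = (\<lambda>i. c - i) -` {i. g i \<noteq> \<one>\<^bsub>P\<^esub>}" by auto
  moreover have "inj (\<lambda>i::int. c - i)" by (rule injI) simp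
  moreover have "finite {i. g i \<noteq> \<one>\<^bsub>P\<^esub>}" using assms by (simp add: fsseq_def)
  ultimately have "finite {i. g (c - i) \<noteq> \<one>\<^bsub>P\<^esub>}"
    by (metis finite_vimageI)
  then show ?thesis using assms unfolding fsseq_def by auto
qed

lemma smult_shift_sinv_apply:
  "smult P (smult P (smult P g1 (shift (sinv P g1))) g2) (shift (sinv P g2)) i
     = g1 i \<otimes>\<^bsub>P\<^esub> inv\<^bsub>P\<^esub> g1 (i + 1) \<otimes>\<^bsub>P\<^esub> g2 i \<otimes>\<^bsub>P\<^esub> inv\<^bsub>P\<^esub> g2 (i + 1)"
  "smult P (smult P (smult P (shift g1) (sinv P g1)) (shift g2)) (sinv P g2) i
     = g1 (i + 1) \<otimes>\<^bsub>P\<^esub> inv\<^bsub>P\<^esub> g1 i \<otimes>\<^bsub>P\<^esub> g2 (i + 1) \<otimes>\<^bsub>P\<^esub> inv\<^bsub>P\<^esub> g2 i"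
  by (simp_all add: smult_def sinv_def shift_def)

definition suffix_prod :: "('a, 'b) monoid_scheme \<Rightarrow> (int \<Rightarrow> 'a) \<Rightarrow> int \<Rightarrow> int \<Rightarrow> 'a" where
  "suffix_prod P h M i = foldr (\<lambda>j acc. h j \<otimes>\<^bsub>P\<^esub> acc) [i..M] \<one>\<^bsub>P\<^esub>"

lemma (in group) suffix_prod_closed:
  assumes "\<And>i. h i \<in> carrier G"
  shows "suffix_prod G h M i \<in> carrier G"
proof -
  have "foldr (\<lambda>j acc. h j \<otimes> acc) js \<one> \<in> carrier G" for js
    by (induction js) (simp_all add: assms)
  then show ?thesis by (simp add: suffix_prod_def)
qed

lemma suffix_prod_above: "M < i \<Longrightarrow> suffix_prod P h M i = \<one>\<^bsub>P\<^esub>"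
  by (simp add: suffix_prod_def)

lemma (in group) suffix_prod_rec:
  assumes "h i \<in> carrier G" and "M < i \<Longrightarrow> h i = \<one>"
  shows "suffix_prod G h M i = h i \<otimes> suffix_prod G h M (i + 1)"
  using assms suffix_prod_above
  by (cases "i \<le> M") (simp_all add: suffix_prod_def upto_rec1)

lemma fsseq_two_shift_commutators:
  assumes "group P" and "S1 P" and h: "h \<in> fsseq P"
  shows "\<exists>g1\<in>fsseq P. \<exists>g2\<in>fsseq P.
           h = smult P (smult P (smult P g1 (shift (sinv P g1))) g2) (shift (sinv P g2))"
proof -
  interpret group P by fact
  have hc: "\<And>i. h i \<in> carrier P" using h by (simp add: fsseq_def)
  obtain k where k: "\<And>i. k \<le> \<bar>i\<bar> \<Longrightarrow> h i = \<one>\<^bsub>P\<^esub>"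
    using fsseq_bounded_support[OF h] by blast
  define m where "m = - k"
  have h_high: "h i = \<one>\<^bsub>P\<^esub>" if "k < i" for i
    using that by (intro k) simp
  have h_low: "h i = \<one>\<^bsub>P\<^esub>" if "i < m" for i
    using that by (intro k) (simp add: m_def)
  define F where "F = suffix_prod P h k"
  have Fc: "\<And>i. F i \<in> carrier P"
    using hc by (simp add: F_def suffix_prod_closed)
  have F_rec: "\<And>i. F i = h i \<otimes>\<^bsub>P\<^esub> F (i + 1)"
    unfolding F_def using hc h_high by (rule suffix_prod_rec)
  have F_big: "\<And>i. k < i \<Longrightarrow> F i = \<one>\<^bsub>P\<^esub>"
    by (simp add: F_def suffix_prod_above)
  obtain x y where xy: "x \<in> carrier P" "y \<in> carrier P" and
    hm: "h m = inv\<^bsub>P\<^esub> x \<otimes>\<^bsub>P\<^esub> inv\<^bsub>P\<^esub> F (m + 1) \<otimes>\<^bsub>P\<^esub> y \<otimes>\<^bsub>P\<^esub> x \<otimes>\<^bsub>P\<^esub> inv\<^bsub>P\<^esub> y"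
    using \<open>S1 P\<close> Fc[of "m + 1"] hc[of m] unfolding S1_def by blast
  define g1 where "g1 i = (if m + 1 \<le> i then F i else if i = m then inv\<^bsub>P\<^esub> x
      else if i = m - 1 then y else \<one>\<^bsub>P\<^esub>)" for i
  define g2 where "g2 i = (if i = m then y \<otimes>\<^bsub>P\<^esub> x \<otimes>\<^bsub>P\<^esub> inv\<^bsub>P\<^esub> y
      else if i = m - 1 then inv\<^bsub>P\<^esub> y else \<one>\<^bsub>P\<^esub>)" for i
  have "{i. g1 i \<noteq> \<one>\<^bsub>P\<^esub>} \<subseteq> {m - 1..max m k}"
    using F_big by (auto simp: g1_def) (meson le_max_iff_disj not_le)+
  then have g1: "g1 \<in> fsseq P"
    using Fc xy unfolding fsseq_def g1_def by (simp add: finite_subset)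
  have "{i. g2 i \<noteq> \<one>\<^bsub>P\<^esub>} \<subseteq> {m - 1..m}" by (auto simp: g2_def)
  then have g2: "g2 \<in> fsseq P"
    using xy unfolding fsseq_def g2_def by (simp add: finite_subset)
  have "h i = g1 i \<otimes>\<^bsub>P\<^esub> inv\<^bsub>P\<^esub> g1 (i + 1) \<otimes>\<^bsub>P\<^esub> g2 i \<otimes>\<^bsub>P\<^esub> inv\<^bsub>P\<^esub> g2 (i + 1)" for i
  proof -
    consider "m + 1 \<le> i" | "i = m" | "i = m - 1" | "i < m - 1" by linarith
    then show ?thesis
    proof cases
      case 1
      then show ?thesis using F_rec[of i] Fc hc by (simp add: g1_def g2_def m_assoc)
    next
      case 2
      then show ?thesis using hm xy Fc by (simp add: g1_def g2_def m_assoc)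
    next
      case 3
      then show ?thesis using h_low[of i] xy by (simp add: g1_def g2_def)
    next
      case 4
      then show ?thesis using h_low[of i] xy by (simp add: g1_def g2_def)
    qed
  qed
  then have "h = smult P (smult P (smult P g1 (shift (sinv P g1))) g2) (shift (sinv P g2))"
    by (simp add: fun_eq_iff smult_shift_sinv_apply)
  with g1 g2 show ?thesis by blast
qed

theorem lemma4p4:
  fixes P :: "('a, 'b) monoid_scheme"
  assumes "group P" and "finite (carrier P)"
    and "S1 P" and "S2 P" and "S3 P" and "S4 P"
    and "h \<in> fsseq P"
  shows "(\<exists>g1\<in>fsseq P. \<exists>g2\<in>fsseq P.
            h = smult P (smult P (smult P g1 (shift (sinv P g1))) g2) (shift (sinv P g2)))
       \<and> (\<exists>g1\<in>fsseq P. \<exists>g2\<in>fsseq P.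
            h = smult P (smult P (smult P (shift g1) (sinv P g1)) (shift g2)) (sinv P g2))"
proof
  show "\<exists>g1\<in>fsseq P. \<exists>g2\<in>fsseq P.
          h = smult P (smult P (smult P g1 (shift (sinv P g1))) g2) (shift (sinv P g2))"
    by (rule fsseq_two_shift_commutators[OF assms(1,3,7)])
  obtain g1 g2 where g: "g1 \<in> fsseq P" "g2 \<in> fsseq P" and
    e: "(\<lambda>i. h (-1 - i)) = smult P (smult P (smult P g1 (shift (sinv P g1))) g2) (shift (sinv P g2))"
    using fsseq_two_shift_commutators[OF assms(1,3) fsseq_reflect[OF assms(7)]] by blast
  have "h i = g1 (- 1 - i) \<otimes>\<^bsub>P\<^esub> inv\<^bsub>P\<^esub> g1 (- i) \<otimes>\<^bsub>P\<^esub> g2 (- 1 - i)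
      \<otimes>\<^bsub>P\<^esub> inv\<^bsub>P\<^esub> g2 (- i)" for i
    using fun_cong[OF e, of "- 1 - i"] by (simp add: smult_shift_sinv_apply)
  then have "h = smult P (smult P (smult P (shift (\<lambda>i. g1 (0 - i))) (sinv P (\<lambda>i. g1 (0 - i))))
             (shift (\<lambda>i. g2 (0 - i)))) (sinv P (\<lambda>i. g2 (0 - i)))"
    by (simp add: fun_eq_iff smult_shift_sinv_apply minus_diff_commute)
  then show "\<exists>g1\<in>fsseq P. \<exists>g2\<in>fsseq P.
          h = smult P (smult P (smult P (shift g1) (sinv P g1)) (shift g2)) (sinv P g2)"
    using fsseq_reflect[OF g(1)] fsseq_reflect[OF g(2)] by blast
qed

end
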